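(* Assume the independence, boundedness and uniformly-lower-bounded-second-moment conditions in the context. Fix $t\ge2$, $\ell\in[t-1]$, fixed models $f_1,f_2$ with $|f_\lambda(\bm x)|\le M$, and $\delta\in(0,1)$. Define $\phi_R(t,\ell)=\max_{t-\ell\le j\le t-1}|\Delta^R_j-\Delta^R_t|$ and $\psi_R(t,\ell,\delta)=8M^2/v$ if $n_{t,\ell}=1$, and $\psi_R(t,\ell,\delta)=\sigma^R_{t,\ell}\sqrt{2\log(2/\delta)/n_{t,\ell}}+\frac{16(M^2/v)\log(2/\delta)}{3n_{t,\ell}}$ if $n_{t,\ell}\ge2$. Then with probability at least $1-\delta$, \[ |\widehat\Delta^R_{t,\ell}-\Delta^R_t|\le\phi_R(t,\ell)+\psi_R(t,\ell,\delta). \]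
   Context: For each period $j$, $P_j$ is a distribution of $(\bm x,y)\in\mathcal X\times\mathbb R$. Validation data $\{(\bm x^{\mathrm{va}}_{j,i},y^{\mathrm{va}}_{j,i})\}_{i=1}^{n_j}$ ($n_j\ge1$) are i.i.d. from $P_j$, independent across $j$. Boundedness: $M\ge1$ with $|y|\le M$ a.s. under each $P_j$. $V_j=\mathbb E_{P_j}[y^2]$, and there is $v>0$ with $V_j\ge v$ for all $j$. $L_j(f)=\mathbb E_{P_j}[(f(\bm x)-y)^2]$, $\Delta_j=L_j(f_1)-L_j(f_2)$, $\Delta^R_j=\Delta_j/V_j$. $n_{t,\ell}=\sum_{j=t-\ell}^{t-1}n_j$, $V_{t,\ell}=\frac1{n_{t,\ell}}\sum_{j=t-\ell}^{t-1}n_jV_j$. $u_{j,i}=[f_1(\bm x^{\mathrm{va}}_{j,i})-y^{\mathrm{va}}_{j,i}]^2-[f_2(\bm x^{\mathrm{va}}_{j,i})-y^{\mathrm{va}}_{j,i}]^2$, $\widehat\Delta_{t,\ell}=\frac1{n_{t,\ell}}\sum_{j=t-\ell}^{t-1}\sum_{i=1}^{n_j}u_{j,i}$, $\widehat\Delta^R_{t,\ell}=\widehat\Delta_{t,\ell}/V_{t,\ell}$. $\sigma^2_{t,\ell}=\frac1{n_{t,\ell}}\sum_{j=t-\ell}^{t-1}n_j\operatorname{Var}(u_{j,1})$ and $\sigma^R_{t,\ell}=\sigma_{t,\ell}/V_{t,\ell}$. *)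

theory Defs
  imports "HOL-Probability.Probability"
begin

definition sqloss :: "('x \<Rightarrow> real) \<Rightarrow> 'x \<times> real \<Rightarrow> real" where
  "sqloss f z = (f (fst z) - snd z)^2"

definition risk :: "('x \<times> real) measure \<Rightarrow> ('x \<Rightarrow> real) \<Rightarrow> real" where
  "risk Pj f = integral\<^sup>L Pj (sqloss f)"

definition udiff :: "('x \<Rightarrow> real) \<Rightarrow> ('x \<Rightarrow> real) \<Rightarrow> 'x \<times> real \<Rightarrow> real" where
  "udiff f1 f2 z = sqloss f1 z - sqloss f2 z"

definition Vmom :: "('x \<times> real) measure \<Rightarrow> real" where
  "Vmom Pj = integral\<^sup>L Pj (\<lambda>z. (snd z)^2)"

definition Delta :: "(nat \<Rightarrow> ('x \<times> real) measure) \<Rightarrow> ('x \<Rightarrow> real) \<Rightarrow> ('x \<Rightarrow> real) \<Rightarrow> nat \<Rightarrow> real" where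
  "Delta P f1 f2 j = risk (P j) f1 - risk (P j) f2"

definition DeltaR :: "(nat \<Rightarrow> ('x \<times> real) measure) \<Rightarrow> ('x \<Rightarrow> real) \<Rightarrow> ('x \<Rightarrow> real) \<Rightarrow> nat \<Rightarrow> real" where
  "DeltaR P f1 f2 j = Delta P f1 f2 j / Vmom (P j)"

definition window :: "nat \<Rightarrow> nat \<Rightarrow> nat set" where
  "window t l = {t - l .. t - 1}"

definition ntl :: "(nat \<Rightarrow> nat) \<Rightarrow> nat \<Rightarrow> nat \<Rightarrow> nat" where
  "ntl n t l = (\<Sum>j\<in>window t l. n j)"

definition Vtl :: "(nat \<Rightarrow> ('x \<times> real) measure) \<Rightarrow> (nat \<Rightarrow> nat) \<Rightarrow> nat \<Rightarrow> nat \<Rightarrow> real" where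
  "Vtl P n t l = (1 / real (ntl n t l)) * (\<Sum>j\<in>window t l. real (n j) * Vmom (P j))"

definition uvar :: "('x \<times> real) measure \<Rightarrow> ('x \<Rightarrow> real) \<Rightarrow> ('x \<Rightarrow> real) \<Rightarrow> real" where
  "uvar Pj f1 f2 = integral\<^sup>L Pj (\<lambda>z. (udiff f1 f2 z - integral\<^sup>L Pj (udiff f1 f2))^2)"

definition sigma2tl :: "(nat \<Rightarrow> ('x \<times> real) measure) \<Rightarrow> ('x \<Rightarrow> real) \<Rightarrow> ('x \<Rightarrow> real) \<Rightarrow> (nat \<Rightarrow> nat) \<Rightarrow> nat \<Rightarrow> nat \<Rightarrow> real" where
  "sigma2tl P f1 f2 n t l = (1 / real (ntl n t l)) * (\<Sum>j\<in>window t l. real (n j) * uvar (P j) f1 f2)"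

definition sigmaRtl :: "(nat \<Rightarrow> ('x \<times> real) measure) \<Rightarrow> ('x \<Rightarrow> real) \<Rightarrow> ('x \<Rightarrow> real) \<Rightarrow> (nat \<Rightarrow> nat) \<Rightarrow> nat \<Rightarrow> nat \<Rightarrow> real" where
  "sigmaRtl P f1 f2 n t l = sqrt (sigma2tl P f1 f2 n t l) / Vtl P n t l"

text \<open>Empirical estimator; sample i of period j is Z j i (indices i < n j).\<close>
definition Deltahat :: "(nat \<Rightarrow> nat \<Rightarrow> 'a \<Rightarrow> 'x \<times> real) \<Rightarrow> ('x \<Rightarrow> real) \<Rightarrow> ('x \<Rightarrow> real) \<Rightarrow> (nat \<Rightarrow> nat) \<Rightarrow> nat \<Rightarrow> nat \<Rightarrow> 'a \<Rightarrow> real" where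
  "Deltahat Z f1 f2 n t l \<omega> = (1 / real (ntl n t l)) * (\<Sum>j\<in>window t l. \<Sum>i<n j. udiff f1 f2 (Z j i \<omega>))"

definition DeltahatR :: "(nat \<Rightarrow> ('x \<times> real) measure) \<Rightarrow> (nat \<Rightarrow> nat \<Rightarrow> 'a \<Rightarrow> 'x \<times> real) \<Rightarrow> ('x \<Rightarrow> real) \<Rightarrow> ('x \<Rightarrow> real) \<Rightarrow> (nat \<Rightarrow> nat) \<Rightarrow> nat \<Rightarrow> nat \<Rightarrow> 'a \<Rightarrow> real" where
  "DeltahatR P Z f1 f2 n t l \<omega> = Deltahat Z f1 f2 n t l \<omega> / Vtl P n t l"

definition phiR :: "(nat \<Rightarrow> ('x \<times> real) measure) \<Rightarrow> ('x \<Rightarrow> real) \<Rightarrow> ('x \<Rightarrow> real) \<Rightarrow> nat \<Rightarrow> nat \<Rightarrow> real" where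
  "phiR P f1 f2 t l = Max ((\<lambda>j. \<bar>DeltaR P f1 f2 j - DeltaR P f1 f2 t\<bar>) ` window t l)"

definition psiR :: "(nat \<Rightarrow> ('x \<times> real) measure) \<Rightarrow> ('x \<Rightarrow> real) \<Rightarrow> ('x \<Rightarrow> real) \<Rightarrow> (nat \<Rightarrow> nat) \<Rightarrow> real \<Rightarrow> real \<Rightarrow> nat \<Rightarrow> nat \<Rightarrow> real \<Rightarrow> real" where
  "psiR P f1 f2 n M v t l \<delta> =
     (if ntl n t l = 1 then 8 * M^2 / v
      else sigmaRtl P f1 f2 n t l * sqrt (2 * ln (2 / \<delta>) / real (ntl n t l))
           + 16 * (M^2 / v) * ln (2 / \<delta>) / (3 * real (ntl n t l)))"

end

theory Submission
  imports Defs
begin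

text \<open>
  Let \<open>D\<close> be the \<open>n\<^sub>j\<close>-weighted mean of the \<open>\<Delta>\<^sub>j\<close> over the window. The error of the
  relative estimate splits into \<open>(\<Delta>-hat - D) / V\<^sub>t\<^sub>,\<^sub>l\<close> and \<open>D / V\<^sub>t\<^sub>,\<^sub>l - \<Delta>\<^sup>R\<^sub>t\<close>.
  Since \<open>D / V\<^sub>t\<^sub>,\<^sub>l\<close> is a weighted average of the ratios \<open>\<Delta>\<^sub>j / V\<^sub>j\<close>, the second term is
  at most \<open>\<phi>\<^sub>R\<close>. The first is a sum of \<open>n\<^sub>t\<^sub>,\<^sub>l\<close> independent centred loss differences,
  each bounded by \<open>8M\<^sup>2\<close>, divided by \<open>n\<^sub>t\<^sub>,\<^sub>l V\<^sub>t\<^sub>,\<^sub>l \<ge> n\<^sub>t\<^sub>,\<^sub>l v\<close>. Bernstein's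
  inequality bounds it by \<open>\<psi>\<^sub>R\<close> with probability \<open>1 - \<delta>\<close>; for a single sample the trivial
  bound \<open>8M\<^sup>2\<close> is used instead. Bernstein's inequality itself follows by the Chernoff method
  from \<open>exp x \<le> 1 + x + x\<^sup>2 / (2 (1 - c/3))\<close> for \<open>x \<le> c < 3\<close>.
\<close>

section \<open>Bernstein's inequality\<close>

lemma two_mult_three_power_le_fact: "2 * 3 ^ k \<le> (fact (k + 2) :: real)"
proof (induction k)
  case 0
  then show ?case by simp
next
  case (Suc k)
  have "2 * 3 ^ Suc k = 3 * (2 * 3 ^ k :: real)" by simp
  also have "\<dots> \<le> 3 * fact (k + 2)" using Suc.IH by (rule mult_left_mono) simp
  also have "\<dots> \<le> real (k + 3) * fact (k + 2)" by (intro mult_right_mono) auto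
  also have "\<dots> = fact (Suc k + 2)" by (simp add: fact_Suc[of "k + 2"] algebra_simps)
  finally show ?case .
qed

lemma exp_le_quadratic_of_nonpos:
  fixes x :: real
  assumes "x \<le> 0"
  shows "exp x \<le> 1 + x + x^2 / 2"
proof -
  let ?h = "\<lambda>x::real. 1 + x + x^2 / 2 - exp x"
  have "?h 0 \<le> ?h x"
  proof (rule DERIV_nonpos_imp_nonincreasing[OF assms])
    fix y :: real
    assume "x \<le> y" "y \<le> 0"
    show "\<exists>d. (?h has_real_derivative d) (at y) \<and> d \<le> 0"
      by (rule exI[of _ "1 + y - exp y"])
         (auto intro!: derivative_eq_intros)
  qed
  then show ?thesis by simp
qed

text \<open>The tail of the exponential series is dominated by a geometric series of ratio \<open>x/3\<close>.\<close>

lemma exp_le_Bernstein_of_nonneg: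
  fixes x :: real
  assumes "0 \<le> x" "x < 3"
  shows "exp x \<le> 1 + x + x^2 / (2 * (1 - x / 3))"
proof -
  have "(\<lambda>k. x^k / fact k) sums exp x"
    using exp_converges[of x] by (simp add: divide_inverse_commute scaleR_conv_of_real)
  then have tail: "(\<lambda>k. x^(k + 2) / fact (k + 2)) sums (exp x - (\<Sum>k<2. x^k / fact k))"
    by (rule sums_split_initial_segment)
  have geom: "(\<lambda>k. x^2 / 2 * (x / 3)^k) sums (x^2 / 2 * (1 / (1 - x / 3)))"
    by (intro sums_mult geometric_sums) (use assms in auto)
  have "x^(k + 2) / fact (k + 2) \<le> x^2 / 2 * (x / 3)^k" for k
  proof -
    have "x^(k + 2) / fact (k + 2) \<le> x^(k + 2) / (2 * 3^k)"
      by (rule divide_left_mono) (use assms two_mult_three_power_le_fact[of k] in auto)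
    also have "\<dots> = x^2 / 2 * (x / 3)^k"
      by (simp add: power_add field_simps power2_eq_square)
    finally show ?thesis .
  qed
  then have "exp x - (\<Sum>k<2. x^k / fact k) \<le> x^2 / 2 * (1 / (1 - x / 3))"
    using tail geom by (rule sums_le)
  then show ?thesis by (simp add: numeral_2_eq_2 field_simps)
qed

lemma exp_le_Bernstein:
  fixes x c :: real
  assumes "0 \<le> c" "c < 3" "x \<le> c"
  shows "exp x \<le> 1 + x + x^2 / (2 * (1 - c / 3))"
proof (cases "x \<le> 0")
  case True
  have "exp x \<le> 1 + x + x^2 / 2" using True by (rule exp_le_quadratic_of_nonpos)
  also have "x^2 / 2 \<le> x^2 / (2 * (1 - c / 3))"
    by (rule divide_left_mono) (use assms in auto)
  finally show ?thesis by simp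
next
  case False
  have "exp x \<le> 1 + x + x^2 / (2 * (1 - x / 3))"
    by (rule exp_le_Bernstein_of_nonneg) (use False assms in auto)
  also have "x^2 / (2 * (1 - x / 3)) \<le> x^2 / (2 * (1 - c / 3))"
    by (rule divide_left_mono) (use assms False in auto)
  finally show ?thesis by simp
qed

lemma (in prob_space) Bernstein_mgf_le:
  assumes [measurable]: "random_variable borel X"
    and bdd: "AE x in M. \<bar>X x\<bar> \<le> b"
    and mean_zero: "expectation X = 0"
    and s: "0 \<le> s" "0 \<le> b" "s * b < 3"
  shows "(\<integral>\<^sup>+x. ennreal (exp (s * X x)) \<partial>M)
           \<le> ennreal (exp (s^2 * expectation (\<lambda>x. (X x)^2) / (2 * (1 - s * b / 3))))"
proof -
  define K where "K = 2 * (1 - s * b / 3)"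
  have int_X: "integrable M X"
    by (rule integrable_const_bound[where B = b]) (use bdd in auto)
  have int_X2: "integrable M (\<lambda>x. (X x)^2)"
    by (rule integrable_const_bound[where B = "b^2"])
       (use bdd s in \<open>auto elim!: eventually_mono simp: power2_le_iff_abs_le\<close>)
  define g where "g x = 1 + s * X x + (s * X x)^2 / K" for x
  have int_g: "integrable M g"
    unfolding g_def power_mult_distrib
    by (intro Bochner_Integration.integrable_add integrable_const integrable_mult_right
        integrable_divide int_X int_X2)
  have exp_le_g: "AE x in M. exp (s * X x) \<le> g x"
    using bdd
  proof eventually_elim
    case (elim x)
    have "s * X x \<le> s * b" using elim s by (intro mult_left_mono) auto
    then show ?case unfolding g_def K_def by (intro exp_le_Bernstein) (use s in auto)
  qed
  have "(\<integral>\<^sup>+x. ennreal (exp (s * X x)) \<partial>M) \<le> (\<integral>\<^sup>+x. ennreal (g x) \<partial>M)"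
    using exp_le_g by (intro nn_integral_mono_AE) (auto elim!: eventually_mono intro: ennreal_leI)
  also have "\<dots> = ennreal (expectation g)"
    using exp_le_g
    by (intro nn_integral_eq_integral int_g)
       (auto elim!: eventually_mono intro: order.trans[OF less_imp_le[OF exp_gt_zero]])
  also have "expectation g = 1 + s^2 * expectation (\<lambda>x. (X x)^2) / K"
    unfolding g_def power_mult_distrib using int_X int_X2 mean_zero by (simp add: prob_space)
  also have "\<dots> \<le> exp (s^2 * expectation (\<lambda>x. (X x)^2) / K)"
    by (rule exp_ge_add_one_self[THEN order_trans[rotated]]) simp
  finally show ?thesis by (simp add: K_def ennreal_leI)
qed

lemma (in prob_space) Bernstein_Chernoff_bound:
  assumes fin: "finite I" and indep: "indep_vars (\<lambda>_. borel) X I"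
    and bdd: "\<And>i. i \<in> I \<Longrightarrow> AE x in M. \<bar>X i x\<bar> \<le> b"
    and mean_zero: "\<And>i. i \<in> I \<Longrightarrow> expectation (X i) = 0"
    and s: "0 < s" "0 \<le> b" "s * b < 3"
  shows "prob {x\<in>space M. r \<le> (\<Sum>i\<in>I. X i x)}
           \<le> exp (- s * r + s^2 * (\<Sum>i\<in>I. expectation (\<lambda>x. (X i x)^2)) / (2 * (1 - s * b / 3)))"
proof -
  define K where "K = 2 * (1 - s * b / 3)"
  have rv[measurable]: "random_variable borel (X i)" if "i \<in> I" for i
    using that indep unfolding indep_vars_def by blast
  have "ennreal (prob {x\<in>space M. r \<le> (\<Sum>i\<in>I. X i x)})
          \<le> ennreal (exp (- s * r)) * (\<integral>\<^sup>+x\<in>space M. exp (s * (\<Sum>i\<in>I. X i x)) \<partial>M)"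
    unfolding emeasure_eq_measure[symmetric] by (intro Chernoff_ineq_nn_integral_ge s) auto
  also have "(\<integral>\<^sup>+x\<in>space M. exp (s * (\<Sum>i\<in>I. X i x)) \<partial>M)
               = (\<integral>\<^sup>+x. (\<Prod>i\<in>I. ennreal (exp (s * X i x))) \<partial>M)"
    by (intro nn_integral_cong) (simp_all add: sum_distrib_left exp_sum fin prod_ennreal)
  also have "\<dots> = (\<Prod>i\<in>I. \<integral>\<^sup>+x. ennreal (exp (s * X i x)) \<partial>M)"
    by (intro indep_vars_nn_integral fin indep_vars_compose2[OF indep]) auto
  also have "ennreal (exp (- s * r)) * \<dots>
               \<le> ennreal (exp (- s * r)) * (\<Prod>i\<in>I. ennreal (exp (s^2 * expectation (\<lambda>x. (X i x)^2) / K)))"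
    unfolding K_def
    by (intro mult_left_mono prod_mono_ennreal Bernstein_mgf_le rv bdd mean_zero) (use s in auto)
  also have "\<dots> = ennreal (exp (- s * r + s^2 * (\<Sum>i\<in>I. expectation (\<lambda>x. (X i x)^2)) / K))"
    by (simp add: prod_ennreal exp_add exp_sum[OF fin, symmetric] sum_divide_distrib sum_distrib_left
        exp_diff exp_minus field_simps flip: ennreal_mult)
  finally show ?thesis by (simp add: K_def)
qed

lemma (in prob_space) Bernstein_ineq_ge:
  assumes fin: "finite I" and indep: "indep_vars (\<lambda>_. borel) X I"
    and bdd: "\<And>i. i \<in> I \<Longrightarrow> AE x in M. \<bar>X i x\<bar> \<le> b"
    and mean_zero: "\<And>i. i \<in> I \<Longrightarrow> expectation (X i) = 0"
    and b: "0 < b" and r: "0 < r"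
  shows "prob {x\<in>space M. r \<le> (\<Sum>i\<in>I. X i x)}
           \<le> exp (- (r^2) / (2 * ((\<Sum>i\<in>I. expectation (\<lambda>x. (X i x)^2)) + b * r / 3)))"
proof -
  define V where "V = (\<Sum>i\<in>I. expectation (\<lambda>x. (X i x)^2))"
  have rv[measurable]: "random_variable borel (X i)" if "i \<in> I" for i
    using that indep unfolding indep_vars_def by blast
  have "0 \<le> V" unfolding V_def by (intro sum_nonneg) simp
  show ?thesis
  proof (cases "V = 0")
    case True
    have "AE x in M. (X i x)^2 = 0" if "i \<in> I" for i
    proof -
      have "integrable M (\<lambda>x. (X i x)^2)"
        by (rule integrable_const_bound[where B = "b^2"])
           (use bdd[OF that] rv[OF that] b in \<open>auto elim!: eventually_mono simp: power2_le_iff_abs_le\<close>)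
      moreover have "expectation (\<lambda>x. (X i x)^2) = 0"
        using True fin that unfolding V_def by (subst (asm) sum_nonneg_eq_0_iff) auto
      ultimately show ?thesis by (subst (asm) integral_nonneg_eq_0_iff_AE) auto
    qed
    then have "AE x in M. \<forall>i\<in>I. X i x = 0"
      by (subst AE_finite_all[OF fin]) auto
    then have "AE x in M. x \<notin> {x\<in>space M. r \<le> (\<Sum>i\<in>I. X i x)}"
      by eventually_elim (use r in auto)
    then show ?thesis by (subst prob_eq_0[THEN iffD2]) auto
  next
    case False
    with \<open>0 \<le> V\<close> have "0 < V" by simp
    define D where "D = V + b * r / 3"
    have "0 < D" using \<open>0 < V\<close> b r by (simp add: D_def add_pos_pos)
    text \<open>The Chernoff exponent is minimised at \<open>s = r / D\<close>.\<close>
    define s where "s = r / D"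
    have one_minus: "1 - s * b / 3 = V / D" using \<open>0 < D\<close> by (simp add: s_def D_def field_simps)
    have "s * b < 3" using one_minus divide_pos_pos[OF \<open>0 < V\<close> \<open>0 < D\<close>] by linarith
    have "prob {x\<in>space M. r \<le> (\<Sum>i\<in>I. X i x)} \<le> exp (- s * r + s^2 * V / (2 * (1 - s * b / 3)))"
      unfolding V_def
      by (rule Bernstein_Chernoff_bound[OF fin indep bdd mean_zero])
         (use \<open>s * b < 3\<close> \<open>0 < D\<close> b r in \<open>auto simp: s_def\<close>)
    also have "- s * r + s^2 * V / (2 * (1 - s * b / 3)) = - (r^2) / (2 * D)"
      unfolding one_minus using \<open>0 < V\<close> \<open>0 < D\<close> by (simp add: s_def field_simps power2_eq_square)
    finally show ?thesis by (simp add: D_def V_def)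
  qed
qed

lemma Bernstein_radius_exponent_le:
  fixes V b L :: real
  assumes "0 \<le> V" "0 < b" "0 < L"
  defines "r \<equiv> sqrt (2 * L * V) + 2 * b * L / 3"
  shows "- (r^2) / (2 * (V + b * r / 3)) \<le> - L"
proof -
  have "0 < r" using assms by (simp add: r_def add_nonneg_pos)
  have "(sqrt (2 * L * V))^2 = 2 * L * V" using assms by simp
  then have "2 * L * (V + b * r / 3) \<le> r^2"
    using assms unfolding r_def by (simp add: power2_eq_square algebra_simps)
  then show ?thesis
    using assms(1,2) \<open>0 < r\<close> by (simp add: field_simps add_nonneg_pos)
qed

lemma (in prob_space) Bernstein_ineq_abs:
  assumes fin: "finite I" and indep: "indep_vars (\<lambda>_. borel) X I"
    and bdd: "\<And>i. i \<in> I \<Longrightarrow> AE x in M. \<bar>X i x\<bar> \<le> b"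
    and mean_zero: "\<And>i. i \<in> I \<Longrightarrow> expectation (X i) = 0"
    and b: "0 < b" and \<delta>: "0 < \<delta>" "\<delta> < 1"
  shows "prob {x\<in>space M. sqrt (2 * ln (2 / \<delta>) * (\<Sum>i\<in>I. expectation (\<lambda>x. (X i x)^2)))
                              + 2 * b * ln (2 / \<delta>) / 3 < \<bar>\<Sum>i\<in>I. X i x\<bar>} \<le> \<delta>"
proof -
  define V where "V = (\<Sum>i\<in>I. expectation (\<lambda>x. (X i x)^2))"
  define L where "L = ln (2 / \<delta>)"
  define r where "r = sqrt (2 * L * V) + 2 * b * L / 3"
  have "0 \<le> V" unfolding V_def by (intro sum_nonneg) simp
  have "0 < L" using \<delta> by (simp add: L_def)
  have "0 < r" using \<open>0 < L\<close> \<open>0 \<le> V\<close> b by (simp add: r_def add_nonneg_pos)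
  have rv[measurable]: "random_variable borel (X i)" if "i \<in> I" for i
    using that indep unfolding indep_vars_def by blast
  have tail: "exp (- (r^2) / (2 * (V + b * r / 3))) \<le> \<delta> / 2"
  proof -
    have "exp (- (r^2) / (2 * (V + b * r / 3))) \<le> exp (- L)"
      using Bernstein_radius_exponent_le[OF \<open>0 \<le> V\<close> b \<open>0 < L\<close>] unfolding r_def by simp
    also have "exp (- L) = \<delta> / 2" using \<delta> by (simp add: L_def exp_minus)
    finally show ?thesis .
  qed
  have upper: "prob {x\<in>space M. r \<le> (\<Sum>i\<in>I. X i x)} \<le> \<delta> / 2"
    using Bernstein_ineq_ge[OF fin indep bdd mean_zero b \<open>0 < r\<close>] tail unfolding V_def by linarith
  have lower: "prob {x\<in>space M. r \<le> (\<Sum>i\<in>I. - X i x)} \<le> \<delta> / 2"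
  proof -
    have "prob {x\<in>space M. r \<le> (\<Sum>i\<in>I. - X i x)}
            \<le> exp (- (r^2) / (2 * ((\<Sum>i\<in>I. expectation (\<lambda>x. (- X i x)^2)) + b * r / 3)))"
      by (rule Bernstein_ineq_ge[OF fin _ _ _ b \<open>0 < r\<close>])
         (use bdd mean_zero in \<open>auto intro: indep_vars_compose2[OF indep]\<close>)
    then show ?thesis using tail unfolding V_def by simp
  qed
  have "{x\<in>space M. r < \<bar>\<Sum>i\<in>I. X i x\<bar>}
          \<subseteq> {x\<in>space M. r \<le> (\<Sum>i\<in>I. X i x)} \<union> {x\<in>space M. r \<le> (\<Sum>i\<in>I. - X i x)}"
    by (auto simp: sum_negf)
  then have "prob {x\<in>space M. r < \<bar>\<Sum>i\<in>I. X i x\<bar>}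
               \<le> prob ({x\<in>space M. r \<le> (\<Sum>i\<in>I. X i x)} \<union> {x\<in>space M. r \<le> (\<Sum>i\<in>I. - X i x)})"
    by (intro finite_measure_mono) auto
  also have "\<dots> \<le> prob {x\<in>space M. r \<le> (\<Sum>i\<in>I. X i x)} + prob {x\<in>space M. r \<le> (\<Sum>i\<in>I. - X i x)}"
    by (intro measure_Un_le) auto
  also have "\<dots> \<le> \<delta>" using upper lower by simp
  finally show ?thesis by (simp add: r_def L_def V_def)
qed

lemma (in prob_space) prob_abs_sum_le_Bernstein:
  fixes b :: real
  assumes fin: "finite I" and indep: "indep_vars (\<lambda>_. borel) X I"
    and bdd: "\<And>i. i \<in> I \<Longrightarrow> AE x in M. \<bar>X i x\<bar> \<le> b"
    and mean_zero: "\<And>i. i \<in> I \<Longrightarrow> expectation (X i) = 0"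
    and b: "0 < b" and \<delta>: "0 < \<delta>" "\<delta> < 1"
  shows "1 - \<delta> \<le> prob {x\<in>space M. \<bar>\<Sum>i\<in>I. X i x\<bar> \<le> min (real (card I) * b)
           (sqrt (2 * ln (2 / \<delta>) * (\<Sum>i\<in>I. expectation (\<lambda>x. (X i x)^2))) + 2 * b * ln (2 / \<delta>) / 3)}"
proof -
  define r where "r = sqrt (2 * ln (2 / \<delta>) * (\<Sum>i\<in>I. expectation (\<lambda>x. (X i x)^2))) + 2 * b * ln (2 / \<delta>) / 3"
  have [measurable]: "random_variable borel (X i)" if "i \<in> I" for i
    using that indep unfolding indep_vars_def by blast
  have "AE x in M. \<forall>i\<in>I. \<bar>X i x\<bar> \<le> b"
    using bdd by (subst AE_finite_all[OF fin]) auto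
  then have trivial: "AE x in M. \<bar>\<Sum>i\<in>I. X i x\<bar> \<le> real (card I) * b"
  proof eventually_elim
    case (elim x)
    have "\<bar>\<Sum>i\<in>I. X i x\<bar> \<le> (\<Sum>i\<in>I. \<bar>X i x\<bar>)" by (rule sum_abs)
    also have "\<dots> \<le> (\<Sum>i\<in>I. b)" using elim by (intro sum_mono) auto
    finally show ?case by simp
  qed
  have "1 - \<delta> \<le> 1 - prob {x\<in>space M. r < \<bar>\<Sum>i\<in>I. X i x\<bar>}"
    using Bernstein_ineq_abs[OF assms] unfolding r_def by simp
  also have "\<dots> = prob {x\<in>space M. \<bar>\<Sum>i\<in>I. X i x\<bar> \<le> r}"
    by (subst prob_compl[symmetric]) (auto intro!: arg_cong[where f = prob])
  also have "\<dots> \<le> prob {x\<in>space M. \<bar>\<Sum>i\<in>I. X i x\<bar> \<le> min (real (card I) * b) r}"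
    using trivial by (intro finite_measure_mono_AE) (auto elim!: eventually_mono)
  finally show ?thesis by (simp add: r_def)
qed

lemma (in prob_space) prob_abs_sum_centred_samples_le:
  fixes Y :: "'i \<Rightarrow> 'a \<Rightarrow> 'b" and Q :: "'i \<Rightarrow> 'b measure" and g :: "'b \<Rightarrow> real" and b :: real
  assumes fin: "finite I" and indep: "indep_vars (\<lambda>_. S) Y I"
    and distr: "\<And>i. i \<in> I \<Longrightarrow> distr M S (Y i) = Q i"
    and g[measurable]: "g \<in> borel_measurable S"
    and bdd: "\<And>i. i \<in> I \<Longrightarrow> AE z in Q i. \<bar>g z\<bar> \<le> b"
    and b: "0 < b" and \<delta>: "0 < \<delta>" "\<delta> < 1"
  shows "1 - \<delta> \<le> prob {x\<in>space M. \<bar>\<Sum>i\<in>I. g (Y i x) - (\<integral>z. g z \<partial>Q i)\<bar> \<le> min (real (card I) * (2 * b))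
           (sqrt (2 * ln (2 / \<delta>) * (\<Sum>i\<in>I. \<integral>z. (g z - (\<integral>z. g z \<partial>Q i))^2 \<partial>Q i))
            + 2 * (2 * b) * ln (2 / \<delta>) / 3)}"
proof -
  have Y[measurable]: "Y i \<in> measurable M S" if "i \<in> I" for i
    using that indep unfolding indep_vars_def by blast
  have integral_Q: "(\<integral>z. h z \<partial>Q i) = expectation (\<lambda>x. h (Y i x))"
    if "i \<in> I" "h \<in> borel_measurable S" for i and h :: "'b \<Rightarrow> real"
    using integral_distr[OF Y[OF that(1)] that(2)] distr[OF that(1)] by simp
  have bdd_M: "AE x in M. \<bar>g (Y i x)\<bar> \<le> b" if "i \<in> I" for i
    using bdd[OF that] unfolding distr[OF that, symmetric] by (subst (asm) AE_distr_iff[OF Y[OF that]]) auto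
  have int: "integrable M (\<lambda>x. g (Y i x))" if "i \<in> I" for i
    by (rule integrable_const_bound[where B = b]) (use bdd_M[OF that] that in auto)
  have mean_bdd: "\<bar>\<integral>z. g z \<partial>Q i\<bar> \<le> b" if "i \<in> I" for i
  proof -
    have "AE x in M. g (Y i x) \<le> b" "AE x in M. - b \<le> g (Y i x)"
      using bdd_M[OF that] by (auto elim!: eventually_mono)
    then have "expectation (\<lambda>x. g (Y i x)) \<le> b" "- b \<le> expectation (\<lambda>x. g (Y i x))"
      using integral_le_const[OF int[OF that]] integral_ge_const[OF int[OF that]] by auto
    then show ?thesis by (simp add: integral_Q[OF that g] abs_le_iff)
  qed
  define X where "X = (\<lambda>i x. g (Y i x) - (\<integral>z. g z \<partial>Q i))"
  have "1 - \<delta> \<le> prob {x\<in>space M. \<bar>\<Sum>i\<in>I. X i x\<bar> \<le> min (real (card I) * (2 * b))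
           (sqrt (2 * ln (2 / \<delta>) * (\<Sum>i\<in>I. expectation (\<lambda>x. (X i x)^2))) + 2 * (2 * b) * ln (2 / \<delta>) / 3)}"
  proof (rule prob_abs_sum_le_Bernstein[OF fin _ _ _ _ \<delta>])
    show "indep_vars (\<lambda>_. borel) X I"
      unfolding X_def by (rule indep_vars_compose2[OF indep]) auto
    show "AE x in M. \<bar>X i x\<bar> \<le> 2 * b" if "i \<in> I" for i
      using bdd_M[OF that] mean_bdd[OF that] by (auto simp: X_def elim!: eventually_mono)
    show "expectation (X i) = 0" if "i \<in> I" for i
      using integral_Q[OF that g] int[OF that] by (simp add: X_def prob_space)
  qed (use b in auto)
  also have "(\<Sum>i\<in>I. expectation (\<lambda>x. (X i x)^2)) = (\<Sum>i\<in>I. \<integral>z. (g z - (\<integral>z. g z \<partial>Q i))^2 \<partial>Q i)"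
    by (intro sum.cong refl) (simp add: X_def integral_Q)
  finally show ?thesis by (simp add: X_def)
qed

section \<open>The windowed estimator\<close>

lemma weighted_ratio_dist_le_Max:
  fixes w V D :: "'j \<Rightarrow> real"
  assumes fin: "finite W" and ne: "W \<noteq> {}"
    and w: "\<And>j. j \<in> W \<Longrightarrow> 0 < w j" and V: "\<And>j. j \<in> W \<Longrightarrow> 0 < V j"
  shows "\<bar>(\<Sum>j\<in>W. w j * D j) / (\<Sum>j\<in>W. w j * V j) - r\<bar> \<le> Max ((\<lambda>j. \<bar>D j / V j - r\<bar>) ` W)"
proof -
  define m where "m = Max ((\<lambda>j. \<bar>D j / V j - r\<bar>) ` W)"
  define B where "B = (\<Sum>j\<in>W. w j * V j)"
  have "0 < B" unfolding B_def using fin ne w V by (intro sum_pos) auto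
  have V_nz: "V j \<noteq> 0" if "j \<in> W" for j using V[OF that] by simp
  have "(\<Sum>j\<in>W. w j * D j) - r * B = (\<Sum>j\<in>W. w j * V j * (D j / V j - r))"
    unfolding B_def sum_distrib_left sum_subtractf[symmetric]
    by (intro sum.cong) (simp_all add: field_simps V_nz)
  also have "\<bar>\<dots>\<bar> \<le> (\<Sum>j\<in>W. w j * V j * m)"
  proof (rule order.trans[OF sum_abs sum_mono])
    fix j assume "j \<in> W"
    have "\<bar>D j / V j - r\<bar> \<le> m" unfolding m_def using fin \<open>j \<in> W\<close> by (intro Max_ge) auto
    then show "\<bar>w j * V j * (D j / V j - r)\<bar> \<le> w j * V j * m"
      using w[OF \<open>j \<in> W\<close>] V[OF \<open>j \<in> W\<close>] by (simp add: abs_mult mult_left_mono)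
  qed
  also have "\<dots> = B * m" unfolding B_def by (simp add: sum_distrib_right)
  finally have "\<bar>(\<Sum>j\<in>W. w j * D j) - r * B\<bar> / B \<le> m"
    using \<open>0 < B\<close> by (simp add: divide_le_eq mult.commute)
  moreover have "(\<Sum>j\<in>W. w j * D j) / B - r = ((\<Sum>j\<in>W. w j * D j) - r * B) / B"
    using \<open>0 < B\<close> by (simp add: field_simps)
  ultimately show ?thesis
    unfolding B_def[symmetric] m_def[symmetric] using \<open>0 < B\<close> by simp
qed

lemma measurable_sqloss [measurable]:
  assumes [measurable]: "f \<in> borel_measurable Xs"
  shows "sqloss f \<in> borel_measurable (Xs \<Otimes>\<^sub>M borel)"
  unfolding sqloss_def[abs_def] by measurable

lemma measurable_udiff [measurable]:
  assumes "f1 \<in> borel_measurable Xs" "f2 \<in> borel_measurable Xs"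
  shows "udiff f1 f2 \<in> borel_measurable (Xs \<Otimes>\<^sub>M borel)"
  unfolding udiff_def[abs_def] by (intro borel_measurable_diff measurable_sqloss assms)

lemma sqloss_le:
  assumes "\<bar>f (fst z)\<bar> \<le> M" "\<bar>snd z\<bar> \<le> M"
  shows "sqloss f z \<le> 4 * M^2"
proof -
  have "\<bar>f (fst z) - snd z\<bar> \<le> 2 * M" using assms by linarith
  then have "(f (fst z) - snd z)^2 \<le> (2 * M)^2"
    using assms by (subst power2_le_iff_abs_le) auto
  then show ?thesis by (simp add: sqloss_def power_mult_distrib)
qed

lemma abs_udiff_le:
  assumes "\<bar>f1 (fst z)\<bar> \<le> M" "\<bar>f2 (fst z)\<bar> \<le> M" "\<bar>snd z\<bar> \<le> M"
  shows "\<bar>udiff f1 f2 z\<bar> \<le> 4 * M^2"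
proof -
  have "0 \<le> sqloss f1 z" "0 \<le> sqloss f2 z" by (simp_all add: sqloss_def)
  then show ?thesis
    using sqloss_le[of f1 z M, OF assms(1,3)] sqloss_le[of f2 z M, OF assms(2,3)]
    unfolding udiff_def by linarith
qed

lemma risk_diff_eq_integral_udiff:
  assumes "finite_measure Q" and Q_sets: "sets Q = sets (Xs \<Otimes>\<^sub>M borel)"
    and y_bdd: "AE z in Q. \<bar>snd z\<bar> \<le> M"
    and f_meas: "f1 \<in> borel_measurable Xs" "f2 \<in> borel_measurable Xs"
    and f_bdd: "\<And>x. \<bar>f1 x\<bar> \<le> M" "\<And>x. \<bar>f2 x\<bar> \<le> M"
  shows "risk Q f1 - risk Q f2 = (\<integral>z. udiff f1 f2 z \<partial>Q)"
proof -
  have "integrable Q (sqloss f)" if "f \<in> borel_measurable Xs" "\<And>x. \<bar>f x\<bar> \<le> M" for f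
  proof (rule finite_measure.integrable_const_bound[OF assms(1), where B = "4 * M^2"])
    show "AE z in Q. norm (sqloss f z) \<le> 4 * M^2"
      using y_bdd
    proof eventually_elim
      case (elim z)
      then show ?case using sqloss_le[OF that(2) elim] by (simp add: sqloss_def)
    qed
    show "sqloss f \<in> borel_measurable Q"
      unfolding measurable_cong_sets[OF Q_sets refl] using that(1) by measurable
  qed
  then show ?thesis
    unfolding risk_def udiff_def[abs_def] using f_meas f_bdd by (subst Bochner_Integration.integral_diff) auto
qed

lemma samples_eq_Sigma: "{(j, i). j \<in> W \<and> i < n j} = Sigma W (\<lambda>j. {..<n j})"
  by auto

lemma sum_samples_eq_sum_sum:
  fixes n :: "'j \<Rightarrow> nat"
  assumes "finite W"
  shows "(\<Sum>k\<in>{(j, i). j \<in> W \<and> i < n j}. h k) = (\<Sum>j\<in>W. \<Sum>i<n j. h (j, i))"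
proof -
  have "(\<Sum>j\<in>W. \<Sum>i<n j. h (j, i)) = (\<Sum>k\<in>Sigma W (\<lambda>j. {..<n j}). h k)"
    using assms by (subst sum.Sigma) auto
  then show ?thesis by (simp add: samples_eq_Sigma)
qed

lemma finite_window [simp]: "finite (window t l)"
  by (simp add: window_def)

lemma card_samples_eq_ntl: "card {(j, i). j \<in> window t l \<and> i < n j} = ntl n t l"
  unfolding card_eq_sum sum_samples_eq_sum_sum[OF finite_window] ntl_def by simp

lemma ntl_pos:
  assumes "window t l \<noteq> {}" "\<And>j. 1 \<le> n j"
  shows "0 < ntl n t l"
  unfolding ntl_def using assms by (intro sum_pos) (auto simp: Suc_le_eq)

lemma le_Vtl:
  assumes "0 < ntl n t l" "\<And>j. v \<le> Vmom (P j)"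
  shows "v \<le> Vtl P n t l"
proof -
  have "ntl n t l * v = (\<Sum>j\<in>window t l. n j * v)" by (simp add: ntl_def sum_distrib_right)
  also have "\<dots> \<le> (\<Sum>j\<in>window t l. n j * Vmom (P j))"
    using assms(2) by (intro sum_mono mult_left_mono) auto
  finally show ?thesis using assms(1) by (simp add: Vtl_def field_simps)
qed

lemma sum_samples_uvar_eq:
  assumes "0 < ntl n t l"
  shows "(\<Sum>k\<in>{(j, i). j \<in> window t l \<and> i < n j}. uvar (P (fst k)) f1 f2)
           = ntl n t l * sigma2tl P f1 f2 n t l"
  using assms by (simp add: sum_samples_eq_sum_sum sigma2tl_def)

lemma Deltahat_minus_weighted_mean:
  "Deltahat Z f1 f2 n t l \<omega> - (\<Sum>j\<in>window t l. n j * D j) / ntl n t l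
     = (\<Sum>(j, i)\<in>{(j, i). j \<in> window t l \<and> i < n j}. udiff f1 f2 (Z j i \<omega>) - D j) / ntl n t l"
  by (simp add: Deltahat_def sum_samples_eq_sum_sum sum_subtractf diff_divide_distrib)

lemma measurable_DeltahatR:
  assumes [measurable]: "\<And>j i. Z j i \<in> measurable \<Omega> (Xs \<Otimes>\<^sub>M borel)"
    and "f1 \<in> borel_measurable Xs" "f2 \<in> borel_measurable Xs"
  shows "DeltahatR P Z f1 f2 n t l \<in> borel_measurable \<Omega>"
proof -
  note [measurable] = measurable_udiff[OF assms(2,3)]
  show ?thesis unfolding DeltahatR_def[abs_def] Deltahat_def by measurable
qed

lemma DeltahatR_deviation_le:
  assumes ne: "window t l \<noteq> {}" and n_pos: "\<And>j. 1 \<le> n j" and V_pos: "\<And>j. 0 < Vmom (P j)"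
    and dev: "\<bar>Deltahat Z f1 f2 n t l \<omega> - (\<Sum>j\<in>window t l. n j * Delta P f1 f2 j) / ntl n t l\<bar> \<le> \<epsilon>"
  shows "\<bar>DeltahatR P Z f1 f2 n t l \<omega> - DeltaR P f1 f2 t\<bar> \<le> phiR P f1 f2 t l + \<epsilon> / Vtl P n t l"
proof -
  define N where "N = real (ntl n t l)"
  define B where "B = (\<Sum>j\<in>window t l. n j * Vmom (P j))"
  define mean where "mean = (\<Sum>j\<in>window t l. n j * Delta P f1 f2 j) / N"
  have "0 < N" unfolding N_def using ntl_pos[OF ne n_pos] by simp
  have "0 < B" unfolding B_def using ne n_pos V_pos
    by (intro sum_pos) (auto simp: Suc_le_eq)
  have Vtl: "Vtl P n t l = B / N" by (simp add: Vtl_def B_def N_def)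
  have bias: "\<bar>mean / Vtl P n t l - DeltaR P f1 f2 t\<bar> \<le> phiR P f1 f2 t l"
  proof -
    have "mean / Vtl P n t l = (\<Sum>j\<in>window t l. n j * Delta P f1 f2 j) / B"
      using \<open>0 < N\<close> by (simp add: Vtl mean_def)
    then show ?thesis
      unfolding phiR_def DeltaR_def B_def using ne n_pos V_pos
      by (simp only:) (rule weighted_ratio_dist_le_Max, auto simp: Suc_le_eq)
  qed
  have "0 < Vtl P n t l" using \<open>0 < B\<close> \<open>0 < N\<close> by (simp add: Vtl)
  have "DeltahatR P Z f1 f2 n t l \<omega> - mean / Vtl P n t l = (Deltahat Z f1 f2 n t l \<omega> - mean) / Vtl P n t l"
    by (simp add: DeltahatR_def diff_divide_distrib)
  then have "\<bar>DeltahatR P Z f1 f2 n t l \<omega> - mean / Vtl P n t l\<bar> = \<bar>Deltahat Z f1 f2 n t l \<omega> - mean\<bar> / Vtl P n t l"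
    using \<open>0 < Vtl P n t l\<close> by simp
  also have "\<dots> \<le> \<epsilon> / Vtl P n t l"
    using dev \<open>0 < Vtl P n t l\<close> by (simp add: mean_def N_def divide_right_mono)
  finally show ?thesis using bias by linarith
qed

text \<open>Bernstein radius of the unnormalised window sum of centred loss differences; the first
  bound is the trivial one, which is the relevant one when the window holds a single sample.\<close>

definition window_radius ::
    "(nat \<Rightarrow> ('x \<times> real) measure) \<Rightarrow> ('x \<Rightarrow> real) \<Rightarrow> ('x \<Rightarrow> real) \<Rightarrow> (nat \<Rightarrow> nat)
      \<Rightarrow> real \<Rightarrow> nat \<Rightarrow> nat \<Rightarrow> real \<Rightarrow> real" where
  "window_radius P f1 f2 n M t l \<delta> = min (real (ntl n t l) * (8 * M^2))
     (sqrt (2 * ln (2 / \<delta>) * (ntl n t l * sigma2tl P f1 f2 n t l)) + 16 * M^2 * ln (2 / \<delta>) / 3)"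

lemma scaled_window_radius_le_psiR:
  fixes E M v \<delta> :: real
  assumes N: "1 \<le> ntl n t l" and v: "0 < v" "v \<le> Vtl P n t l" and \<delta>: "0 < \<delta>" "\<delta> < 1"
    and E: "E \<le> window_radius P f1 f2 n M t l \<delta>"
  shows "E / ntl n t l / Vtl P n t l \<le> psiR P f1 f2 n M v t l \<delta>"
proof -
  define N where "N = real (ntl n t l)"
  define L where "L = ln (2 / \<delta>)"
  define V where "V = Vtl P n t l"
  define \<sigma>2 where "\<sigma>2 = sigma2tl P f1 f2 n t l"
  have "1 \<le> N" "0 < V" "0 \<le> L" using N v \<delta> by (auto simp: N_def V_def L_def)
  show ?thesis
  proof (cases "N = 1")
    case True
    have "E / N / V \<le> 8 * M^2 / V"
      using E \<open>0 < V\<close> True by (simp add: window_radius_def N_def divide_right_mono)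
    also have "\<dots> \<le> 8 * M^2 / v" using v by (intro divide_left_mono) (auto simp: V_def)
    finally show ?thesis using True by (simp add: psiR_def N_def V_def)
  next
    case False
    have sqrt_eq: "sqrt (2 * L * (N * \<sigma>2)) / N = sqrt \<sigma>2 * sqrt (2 * L / N)"
    proof -
      have "sqrt (2 * L / N) = sqrt (2 * L * N / N^2)" by (simp add: power2_eq_square)
      also have "\<dots> = sqrt (2 * L * N) / N" using \<open>1 \<le> N\<close> by (simp add: real_sqrt_divide)
      finally show ?thesis by (simp add: real_sqrt_mult ac_simps)
    qed
    have "E \<le> sqrt (2 * L * (N * \<sigma>2)) + 16 * M^2 * L / 3"
      using E by (simp add: window_radius_def N_def L_def \<sigma>2_def)
    then have "E / N / V \<le> (sqrt (2 * L * (N * \<sigma>2)) + 16 * M^2 * L / 3) / N / V"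
      using \<open>1 \<le> N\<close> \<open>0 < V\<close> by (intro divide_right_mono) auto
    also have "\<dots> = sqrt \<sigma>2 / V * sqrt (2 * L / N) + 16 * M^2 * L / (3 * N * V)"
      by (simp add: add_divide_distrib flip: sqrt_eq)
    also have "16 * M^2 * L / (3 * N * V) \<le> 16 * M^2 * L / (3 * N * v)"
      using v \<open>1 \<le> N\<close> \<open>0 \<le> L\<close> by (intro divide_left_mono mult_left_mono) (auto simp: V_def)
    also have "\<dots> = 16 * (M^2 / v) * L / (3 * N)" by simp
    finally show ?thesis
      using False by (simp add: psiR_def sigmaRtl_def N_def L_def V_def \<sigma>2_def)
  qed
qed

lemma window_sum_concentration:
  fixes \<Omega> :: "'a measure" and P :: "nat \<Rightarrow> ('x \<times> real) measure" and M \<delta> :: real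
  assumes prob: "prob_space \<Omega>"
    and P_prob: "\<And>j. prob_space (P j)"
    and P_sets: "\<And>j. sets (P j) = sets (Xs \<Otimes>\<^sub>M borel)"
    and Z_distr: "\<And>j i. i < n j \<Longrightarrow> distr \<Omega> (Xs \<Otimes>\<^sub>M borel) (Z j i) = P j"
    and Z_indep: "prob_space.indep_vars \<Omega> (\<lambda>_. Xs \<Otimes>\<^sub>M borel) (\<lambda>(j, i). Z j i)
                    {(j, i). j \<in> window t l \<and> i < n j}"
    and y_bdd: "\<And>j. AE z in P j. \<bar>snd z\<bar> \<le> M"
    and f_meas: "f1 \<in> borel_measurable Xs" "f2 \<in> borel_measurable Xs"
    and f_bdd: "\<And>x. \<bar>f1 x\<bar> \<le> M" "\<And>x. \<bar>f2 x\<bar> \<le> M"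
    and N: "0 < ntl n t l" and M: "0 < M" and \<delta>: "0 < \<delta>" "\<delta> < 1"
  shows "1 - \<delta> \<le> measure \<Omega> {\<omega> \<in> space \<Omega>.
           \<bar>\<Sum>(j, i)\<in>{(j, i). j \<in> window t l \<and> i < n j}. udiff f1 f2 (Z j i \<omega>) - Delta P f1 f2 j\<bar>
             \<le> window_radius P f1 f2 n M t l \<delta>}"
proof -
  interpret prob_space \<Omega> by (rule prob)
  let ?I = "{(j, i). j \<in> window t l \<and> i < n j}"
  have Delta_eq: "(\<integral>z. udiff f1 f2 z \<partial>P j) = Delta P f1 f2 j" for j
    unfolding Delta_def
    by (rule risk_diff_eq_integral_udiff[symmetric, OF prob_space.finite_measure[OF P_prob] P_sets
          y_bdd f_meas f_bdd])
  have uvar_eq: "(\<integral>z. (udiff f1 f2 z - Delta P f1 f2 j)^2 \<partial>P j) = uvar (P j) f1 f2" for j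
    by (simp add: uvar_def Delta_eq)
  have "1 - \<delta> \<le> prob {\<omega> \<in> space \<Omega>. \<bar>\<Sum>k\<in>?I. udiff f1 f2 ((\<lambda>(j, i). Z j i) k \<omega>) - (\<integral>z. udiff f1 f2 z \<partial>P (fst k))\<bar>
          \<le> min (card ?I * (2 * (4 * M^2)))
               (sqrt (2 * ln (2 / \<delta>) * (\<Sum>k\<in>?I. \<integral>z. (udiff f1 f2 z - (\<integral>z. udiff f1 f2 z \<partial>P (fst k)))^2 \<partial>P (fst k)))
                + 2 * (2 * (4 * M^2)) * ln (2 / \<delta>) / 3)}"
  proof (rule prob_abs_sum_centred_samples_le[OF _ Z_indep])
    show "finite ?I" by (simp add: samples_eq_Sigma)
    show "distr \<Omega> (Xs \<Otimes>\<^sub>M borel) ((\<lambda>(j, i). Z j i) k) = P (fst k)" if "k \<in> ?I" for k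
      using Z_distr that by auto
    show "AE z in P (fst k). \<bar>udiff f1 f2 z\<bar> \<le> 4 * M^2" for k :: "nat \<times> nat"
      using y_bdd[of "fst k"] by eventually_elim (rule abs_udiff_le[OF f_bdd])
  qed (use f_meas M \<delta> in auto)
  also have "\<dots> = prob {\<omega> \<in> space \<Omega>. \<bar>\<Sum>(j, i)\<in>?I. udiff f1 f2 (Z j i \<omega>) - Delta P f1 f2 j\<bar>
             \<le> window_radius P f1 f2 n M t l \<delta>}"
    using N by (simp add: window_radius_def Delta_eq uvar_eq card_samples_eq_ntl sum_samples_uvar_eq
        case_prod_beta)
  finally show ?thesis .
qed

lemma DeltahatR_deviation_le_psiR:
  fixes M v \<delta> :: real
  assumes ne: "window t l \<noteq> {}" and n_pos: "\<And>j. 1 \<le> n j"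
    and v: "0 < v" "\<And>j. v \<le> Vmom (P j)" and \<delta>: "0 < \<delta>" "\<delta> < 1"
    and dev: "\<bar>\<Sum>(j, i)\<in>{(j, i). j \<in> window t l \<and> i < n j}. udiff f1 f2 (Z j i \<omega>) - Delta P f1 f2 j\<bar>
             \<le> window_radius P f1 f2 n M t l \<delta>"
  shows "\<bar>DeltahatR P Z f1 f2 n t l \<omega> - DeltaR P f1 f2 t\<bar> \<le> phiR P f1 f2 t l + psiR P f1 f2 n M v t l \<delta>"
proof -
  have N: "0 < ntl n t l" by (rule ntl_pos[OF ne n_pos])
  have V_pos: "0 < Vmom (P j)" for j using v(1) v(2)[of j] by linarith
  have "\<bar>Deltahat Z f1 f2 n t l \<omega> - (\<Sum>j\<in>window t l. n j * Delta P f1 f2 j) / ntl n t l\<bar>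
          \<le> window_radius P f1 f2 n M t l \<delta> / ntl n t l"
    using dev N by (simp add: Deltahat_minus_weighted_mean divide_right_mono)
  then have "\<bar>DeltahatR P Z f1 f2 n t l \<omega> - DeltaR P f1 f2 t\<bar>
               \<le> phiR P f1 f2 t l + window_radius P f1 f2 n M t l \<delta> / ntl n t l / Vtl P n t l"
    by (rule DeltahatR_deviation_le[OF ne n_pos V_pos])
  also have "window_radius P f1 f2 n M t l \<delta> / ntl n t l / Vtl P n t l \<le> psiR P f1 f2 n M v t l \<delta>"
    using N by (intro scaled_window_radius_le_psiR v le_Vtl \<delta>) auto
  finally show ?thesis by simp
qed

theorem mainTheorem6:
  fixes \<Omega> :: "'a measure"
    and Xs :: "'x measure"
    and P :: "nat \<Rightarrow> ('x \<times> real) measure"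
    and Z :: "nat \<Rightarrow> nat \<Rightarrow> 'a \<Rightarrow> 'x \<times> real"
    and n :: "nat \<Rightarrow> nat"
    and f1 f2 :: "'x \<Rightarrow> real"
    and M v \<delta> :: real
    and t l :: nat
  assumes prob: "prob_space \<Omega>"
    and P_prob: "\<And>j. prob_space (P j)"
    and P_sets: "\<And>j. sets (P j) = sets (Xs \<Otimes>\<^sub>M borel)"
    and n_pos: "\<And>j. n j \<ge> 1"
    and Z_meas: "\<And>j i. Z j i \<in> measurable \<Omega> (Xs \<Otimes>\<^sub>M borel)"
    and Z_distr: "\<And>j i. i < n j \<Longrightarrow> distr \<Omega> (Xs \<Otimes>\<^sub>M borel) (Z j i) = P j"
    and Z_indep: "prob_space.indep_vars \<Omega> (\<lambda>_. Xs \<Otimes>\<^sub>M borel) (\<lambda>(j, i). Z j i)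
                    {(j, i). j \<in> window t l \<and> i < n j}"
    and M_ge: "M \<ge> 1"
    and y_bdd: "\<And>j. AE z in P j. \<bar>snd z\<bar> \<le> M"
    and v_pos: "v > 0"
    and V_ge: "\<And>j. Vmom (P j) \<ge> v"
    and t_ge: "t \<ge> 2"
    and l_range: "1 \<le> l" "l \<le> t - 1"
    and f1_meas: "f1 \<in> borel_measurable Xs"
    and f2_meas: "f2 \<in> borel_measurable Xs"
    and f1_bdd: "\<And>x. \<bar>f1 x\<bar> \<le> M"
    and f2_bdd: "\<And>x. \<bar>f2 x\<bar> \<le> M"
    and \<delta>_range: "0 < \<delta>" "\<delta> < 1"
  shows "measure \<Omega> {\<omega> \<in> space \<Omega>.
            \<bar>DeltahatR P Z f1 f2 n t l \<omega> - DeltaR P f1 f2 t\<bar>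
              \<le> phiR P f1 f2 t l + psiR P f1 f2 n M v t l \<delta>} \<ge> 1 - \<delta>"
proof -
  interpret prob_space \<Omega> by (rule prob)
  have "window t l \<noteq> {}" using t_ge l_range by (auto simp: window_def)
  then have N: "0 < ntl n t l" by (rule ntl_pos[OF _ n_pos])
  have "1 - \<delta> \<le> prob {\<omega> \<in> space \<Omega>.
           \<bar>\<Sum>(j, i)\<in>{(j, i). j \<in> window t l \<and> i < n j}. udiff f1 f2 (Z j i \<omega>) - Delta P f1 f2 j\<bar>
             \<le> window_radius P f1 f2 n M t l \<delta>}"
    by (rule window_sum_concentration[OF prob P_prob P_sets Z_distr Z_indep y_bdd f1_meas f2_meas
          f1_bdd f2_bdd N]) (use M_ge \<delta>_range in auto)
  also have "\<dots> \<le> prob {\<omega> \<in> space \<Omega>. \<bar>DeltahatR P Z f1 f2 n t l \<omega> - DeltaR P f1 f2 t\<bar>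
                        \<le> phiR P f1 f2 t l + psiR P f1 f2 n M v t l \<delta>}"
  proof (rule finite_measure_mono)
    show "{\<omega> \<in> space \<Omega>. \<bar>DeltahatR P Z f1 f2 n t l \<omega> - DeltaR P f1 f2 t\<bar>
            \<le> phiR P f1 f2 t l + psiR P f1 f2 n M v t l \<delta>} \<in> events"
      using measurable_DeltahatR[OF Z_meas f1_meas f2_meas] by measurable
  qed (use \<open>window t l \<noteq> {}\<close> n_pos v_pos V_ge \<delta>_range in \<open>auto intro: DeltahatR_deviation_le_psiR\<close>)
  finally show ?thesis .
qed

end
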